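(* Let $L\ge1$ and $a_1,\dots,a_{2L}\ge0$ be integers, and let $\beta=x_1^{a_1}x_2^{a_2}\cdots x_1^{a_{2L-1}}x_2^{a_{2L}}\in\mathcal{B}_3$, with $D=\sum_{i=1}^{2L}a_i$ and $Z=\#\{i:1\le i\le 2L,\ a_i=0\}$. Then $\deg V_3(\beta)\le 3D-2L+2Z$.
   Context: $\mathcal{B}_3$ is the 3-strand braid group with Artin generators $x_1,x_2$; $V_3(\beta)$ is the Jones polynomial of the closure of $\beta$, normalized by $V(\text{unknot})=1$ and $q^{-1}V_{L_+}-qV_{L_-}=(q^{1/2}-q^{-1/2})V_{L_0}$, written as a Laurent polynomial in $s=q^{-1/2}$; $\deg$ is the highest exponent of $s$. Conventions: closures of $\alpha x_i^{e+2}\gamma$, $\alpha x_i^{e+1}\gamma$, $\alpha x_i^{e}\gamma$ play the roles of $L_-,L_0,L_+$ (e.g. the closure of $x_1^2\in\mathcal B_2$ has Jones polynomial $-s-s^5$). *)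

theory Defs
  imports "HOL-Computational_Algebra.Formal_Laurent_Series"
begin

text \<open>
Braid words on n strands: lists of nonzero integers g with |g| < n; the letter g stands
for x_{|g|} if g > 0 and for x_{|g|}^{-1} if g < 0.  Following the paper's convention
(closures of x_i^{e+2}, x_i^{e+1}, x_i^e play the roles of L_-, L_0, L_+), the generator
x_i is a NEGATIVE crossing.  The Jones polynomial is computed via the Kauffman bracket
state sum of the closed braid diagram, in the variable A (formal Laurent series over int,
variable fls_X), with s = q^(-1/2) = A^2.
\<close>

definition braid_word :: "nat \<Rightarrow> int list \<Rightarrow> bool" where
  "braid_word n w \<longleftrightarrow> (\<forall>g\<in>set w. g \<noteq> 0 \<and> nat \<bar>g\<bar> < n)"

text \<open>Points of the closed diagram after smoothing: (level j, strand k), 0 \<le> j \<le> length w,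
k < n; crossing j sits between level j and level j+1; level length w is glued to level 0.
S is the set of crossings receiving the cup-cap (e_i) smoothing; the others receive the
identity smoothing.\<close>

definition smooth_edges :: "nat \<Rightarrow> int list \<Rightarrow> nat set \<Rightarrow> ((nat \<times> nat) \<times> (nat \<times> nat)) set" where
  "smooth_edges n w S =
     {((length w, k), (0, k)) | k. k < n}
   \<union> {((j, k), (Suc j, k)) | j k. j < length w \<and> k < n \<and>
          (j \<notin> S \<or> (k \<noteq> nat \<bar>w ! j\<bar> - 1 \<and> k \<noteq> nat \<bar>w ! j\<bar>))}
   \<union> {((j, nat \<bar>w ! j\<bar> - 1), (j, nat \<bar>w ! j\<bar>)) | j. j < length w \<and> j \<in> S}
   \<union> {((Suc j, nat \<bar>w ! j\<bar> - 1), (Suc j, nat \<bar>w ! j\<bar>)) | j. j < length w \<and> j \<in> S}"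

definition smooth_points :: "nat \<Rightarrow> int list \<Rightarrow> (nat \<times> nat) set" where
  "smooth_points n w = {0..length w} \<times> {..<n}"

definition num_loops :: "nat \<Rightarrow> int list \<Rightarrow> nat set \<Rightarrow> nat" where
  "num_loops n w S =
     card ((\<lambda>v. {u. (v, u) \<in> (smooth_edges n w S \<union> (smooth_edges n w S)\<inverse>)\<^sup>*})
              ` smooth_points n w)"

text \<open>A-exponent of the state S: letter g > 0 (negative crossing) contributes A^(-1) for the
identity smoothing and A for the cup-cap smoothing; g < 0 the opposite.\<close>
definition state_exp :: "int list \<Rightarrow> nat set \<Rightarrow> int" where
  "state_exp w S = (\<Sum>j<length w. if j \<in> S then sgn (w ! j) else - sgn (w ! j))"

definition loop_val :: "int fls" where
  "loop_val = - (fls_X ^ 2) - (fls_X_inv ^ 2)"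

definition kauffman_bracket :: "nat \<Rightarrow> int list \<Rightarrow> int fls" where
  "kauffman_bracket n w =
     (\<Sum>S\<in>Pow {..<length w}. fls_X_intpow (state_exp w S) * loop_val ^ (num_loops n w S - 1))"

definition writhe :: "int list \<Rightarrow> int" where
  "writhe w = (\<Sum>g\<leftarrow>w. - sgn g)"

definition jones_A :: "nat \<Rightarrow> int list \<Rightarrow> int fls" where
  "jones_A n w = fls_const ((-1) ^ nat \<bar>writhe w\<bar>) * fls_X_intpow (-3 * writhe w) * kauffman_bracket n w"

text \<open>Coefficient of s^k in V_n(w), where s = q^(-1/2) = A^2.\<close>
definition jones_coeff :: "nat \<Rightarrow> int list \<Rightarrow> int \<Rightarrow> int" where
  "jones_coeff n w k = fls_nth (jones_A n w) (2 * k)"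

definition jones_deg :: "nat \<Rightarrow> int list \<Rightarrow> int" where
  "jones_deg n w = Max {k. jones_coeff n w k \<noteq> 0}"

definition alt_word :: "nat \<Rightarrow> (nat \<Rightarrow> nat) \<Rightarrow> int list" where
  "alt_word L a = concat (map (\<lambda>i. replicate (a i) (if odd i then 1 else 2)) [1..<2*L+1])"

end

theory Submission
  imports Defs
begin

text \<open>
All letters of the alternating word are positive generators, so a Kauffman state S of the
closed braid diagram has A-exponent 2|S| - N (N = D the word length) and its term
lies in degrees at most 2|S| - N + 2(loops(S) - 1).  Switching the smoothing of one crossing
changes the number of loops by at most one, so |S| + loops(S) is largest for the state
smoothing every crossing into a cup-cap.  In that state the three strands are joined at every
level where the letter changes, so besides one big loop only a repetition x_i x_i (including
the cyclic pair last/first) produces an extra loop; counting repetitions in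
x_1^{a_1} x_2^{a_2} \<dots> gives the bound.  The state with no cup-caps contributes the
unique lowest term, so the Jones polynomial is nonzero and its degree is a genuine maximum.
\<close>

unbundle fps_syntax

section \<open>Connected components of a graph\<close>

definition conn_class :: "('v \<times> 'v) set \<Rightarrow> 'v \<Rightarrow> 'v set" where
  "conn_class E v = {u. (v, u) \<in> (E \<union> E\<inverse>)\<^sup>*}"

definition num_components :: "'v set \<Rightarrow> ('v \<times> 'v) set \<Rightarrow> nat" where
  "num_components V E = card (conn_class E ` V)"

lemma num_loops_eq_num_components:
  "num_loops n w S = num_components (smooth_points n w) (smooth_edges n w S)"
  unfolding num_loops_def num_components_def conn_class_def by simp

lemma symcl_rtrancl_sym: "(u, v) \<in> (E \<union> E\<inverse>)\<^sup>* \<Longrightarrow> (v, u) \<in> (E \<union> E\<inverse>)\<^sup>*"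
proof -
  assume "(u, v) \<in> (E \<union> E\<inverse>)\<^sup>*"
  hence "(v, u) \<in> ((E \<union> E\<inverse>)\<inverse>)\<^sup>*" by (simp add: rtrancl_converse)
  moreover have "(E \<union> E\<inverse>)\<inverse> = E \<union> E\<inverse>" by auto
  ultimately show ?thesis by simp
qed

lemma conn_class_eq_iff: "conn_class E u = conn_class E v \<longleftrightarrow> (u, v) \<in> (E \<union> E\<inverse>)\<^sup>*"
proof
  assume "conn_class E u = conn_class E v"
  moreover have "v \<in> conn_class E v" by (simp add: conn_class_def)
  ultimately have "v \<in> conn_class E u" by simp
  thus "(u, v) \<in> (E \<union> E\<inverse>)\<^sup>*" by (simp add: conn_class_def)
next
  assume "(u, v) \<in> (E \<union> E\<inverse>)\<^sup>*"
  moreover from this have "(v, u) \<in> (E \<union> E\<inverse>)\<^sup>*" by (rule symcl_rtrancl_sym)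
  ultimately show "conn_class E u = conn_class E v"
    unfolding conn_class_def by (metis (lifting) rtrancl_trans)
qed

lemma card_image_le_card_image:
  assumes "finite V" and "\<And>u v. u \<in> V \<Longrightarrow> v \<in> V \<Longrightarrow> f u = f v \<Longrightarrow> g u = g v"
  shows "card (g ` V) \<le> card (f ` V)"
proof -
  have "g ` V = (\<lambda>C. g (inv_into V f C)) ` f ` V"
    unfolding image_image
    by (rule image_cong) (auto intro: assms(2)[symmetric] inv_into_into f_inv_into_f)
  thus ?thesis using assms(1) by (simp add: card_image_le)
qed

lemma num_components_antimono:
  assumes "finite V" "E \<subseteq> E'"
  shows "num_components V E' \<le> num_components V E"
  unfolding num_components_def
proof (rule card_image_le_card_image[OF assms(1)])
  fix u v assume "conn_class E u = conn_class E v"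
  hence "(u, v) \<in> (E \<union> E\<inverse>)\<^sup>*" by (simp add: conn_class_eq_iff)
  moreover have "E \<union> E\<inverse> \<subseteq> E' \<union> E'\<inverse>" using assms(2) by auto
  ultimately have "(u, v) \<in> (E' \<union> E'\<inverse>)\<^sup>*" using rtrancl_mono by blast
  thus "conn_class E' u = conn_class E' v" by (simp add: conn_class_eq_iff)
qed

lemma num_components_insert_connected:
  assumes "(x, y) \<in> (E \<union> E\<inverse>)\<^sup>*"
  shows "num_components V (insert (x, y) E) = num_components V E"
proof -
  have "E \<union> E\<inverse> \<subseteq> insert (x, y) E \<union> (insert (x, y) E)\<inverse>" by auto
  moreover have "insert (x, y) E \<union> (insert (x, y) E)\<inverse> \<subseteq> (E \<union> E\<inverse>)\<^sup>*"
    using assms symcl_rtrancl_sym by auto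
  ultimately have "(insert (x, y) E \<union> (insert (x, y) E)\<inverse>)\<^sup>* = (E \<union> E\<inverse>)\<^sup>*"
    by (rule rtrancl_subset)
  thus ?thesis unfolding num_components_def conn_class_def by simp
qed

lemma num_components_le_insert_Suc:
  assumes "finite V"
  shows "num_components V E \<le> num_components V (insert (x, y) E) + 1"
proof -
  let ?R = "E \<union> E\<inverse>"
  let ?E' = "insert (x, y) E"
  \<comment> \<open>the new edge can only merge components of V0 with the component of x\<close>
  define V0 where "V0 = {v \<in> V. (x, v) \<notin> ?R\<^sup>*}"
  have fin0: "finite V0" using assms V0_def by auto
  have "conn_class E ` V \<subseteq> insert (conn_class E x) (conn_class E ` V0)"
  proof
    fix C assume "C \<in> conn_class E ` V"
    then obtain v where v: "v \<in> V" "C = conn_class E v" by auto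
    show "C \<in> insert (conn_class E x) (conn_class E ` V0)"
    proof (cases "(x, v) \<in> ?R\<^sup>*")
      case True
      hence "conn_class E x = conn_class E v" by (simp add: conn_class_eq_iff)
      thus ?thesis using v by auto
    qed (use v V0_def in auto)
  qed
  hence "card (conn_class E ` V) \<le> card (insert (conn_class E x) (conn_class E ` V0))"
    by (rule card_mono[rotated]) (simp add: fin0)
  also have "\<dots> \<le> card (conn_class E ` V0) + 1" by (simp add: card_insert_if fin0)
  also have "card (conn_class E ` V0) \<le> card (conn_class ?E' ` V0)"
  proof (rule card_image_le_card_image[OF fin0])
    fix u v assume "u \<in> V0" "v \<in> V0" "conn_class ?E' u = conn_class ?E' v"
    moreover have "?E' \<union> ?E'\<inverse> = insert (x, y) (insert (y, x) ?R)" by auto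
    ultimately have "(u, v) \<in> (insert (x, y) (insert (y, x) ?R))\<^sup>*"
      and "(x, u) \<notin> ?R\<^sup>*" "(u, x) \<notin> ?R\<^sup>*" "(x, v) \<notin> ?R\<^sup>*"
      using symcl_rtrancl_sym by (fastforce simp: V0_def conn_class_eq_iff)+
    hence "(u, v) \<in> ?R\<^sup>*" by (auto simp: rtrancl_insert intro: rtrancl_trans)
    thus "conn_class E u = conn_class E v" by (simp add: conn_class_eq_iff)
  qed
  also have "card (conn_class ?E' ` V0) \<le> card (conn_class ?E' ` V)"
    by (rule card_mono) (auto simp: assms V0_def)
  finally show ?thesis unfolding num_components_def by simp
qed

lemma num_components_swap_edges:
  assumes "finite V"
  shows "num_components V (E \<union> {(p, q), (r, t)}) \<le> num_components V (E \<union> {(p, r), (q, t)}) + 1"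
proof -
  let ?G = "E \<union> {(p, q), (r, t)}"
  let ?G1 = "insert (p, r) ?G"
  have "(q, p) \<in> ?G1 \<union> ?G1\<inverse>" "(p, r) \<in> ?G1 \<union> ?G1\<inverse>" "(r, t) \<in> ?G1 \<union> ?G1\<inverse>" by auto
  hence "(q, t) \<in> (?G1 \<union> ?G1\<inverse>)\<^sup>*" by (meson r_into_rtrancl rtrancl_trans)
  hence "num_components V (insert (q, t) ?G1) = num_components V ?G1"
    by (rule num_components_insert_connected)
  moreover have "num_components V (insert (q, t) ?G1) \<le> num_components V (E \<union> {(p, r), (q, t)})"
    by (rule num_components_antimono[OF assms]) auto
  ultimately show ?thesis using num_components_le_insert_Suc[OF assms, of ?G p r] by linarith
qed

lemma num_components_le_card_reps:
  assumes "finite R" "\<And>v. v \<in> V \<Longrightarrow> \<exists>r\<in>R. (v, r) \<in> (E \<union> E\<inverse>)\<^sup>*"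
  shows "num_components V E \<le> card R"
proof -
  have "conn_class E ` V \<subseteq> conn_class E ` R"
    using assms(2) by (fastforce simp: conn_class_eq_iff)
  hence "card (conn_class E ` V) \<le> card (conn_class E ` R)" by (simp add: card_mono assms(1))
  also have "\<dots> \<le> card R" by (rule card_image_le[OF assms(1)])
  finally show ?thesis unfolding num_components_def .
qed

section \<open>Smoothings of a closed braid diagram\<close>

abbreviation smooth_conn :: "nat \<Rightarrow> int list \<Rightarrow> nat set \<Rightarrow> nat \<times> nat \<Rightarrow> nat \<times> nat \<Rightarrow> bool" where
  "smooth_conn n w S u v \<equiv> (u, v) \<in> (smooth_edges n w S \<union> (smooth_edges n w S)\<inverse>)\<^sup>*"

lemma smooth_conn_edge: "(u, v) \<in> smooth_edges n w S \<Longrightarrow> smooth_conn n w S u v"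
  by blast

lemma smooth_conn_trans: "smooth_conn n w S u v \<Longrightarrow> smooth_conn n w S v x \<Longrightarrow> smooth_conn n w S u x"
  by (rule rtrancl_trans)

lemma smooth_conn_sym: "smooth_conn n w S u v \<Longrightarrow> smooth_conn n w S v u"
  by (rule symcl_rtrancl_sym)

lemma smooth_edge_closure: "k < n \<Longrightarrow> ((length w, k), (0, k)) \<in> smooth_edges n w S"
  unfolding smooth_edges_def by blast

lemma smooth_edge_vertical:
  "j < length w \<Longrightarrow> k < n \<Longrightarrow> j \<notin> S \<or> (k \<noteq> nat \<bar>w ! j\<bar> - 1 \<and> k \<noteq> nat \<bar>w ! j\<bar>)
    \<Longrightarrow> ((j, k), (Suc j, k)) \<in> smooth_edges n w S"
  unfolding smooth_edges_def by blast

lemma smooth_edge_cup: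
  "j < length w \<Longrightarrow> j \<in> S \<Longrightarrow> ((j, nat \<bar>w ! j\<bar> - 1), (j, nat \<bar>w ! j\<bar>)) \<in> smooth_edges n w S"
  unfolding smooth_edges_def by blast

lemma smooth_edge_cap:
  "j < length w \<Longrightarrow> j \<in> S \<Longrightarrow> ((Suc j, nat \<bar>w ! j\<bar> - 1), (Suc j, nat \<bar>w ! j\<bar>)) \<in> smooth_edges n w S"
  unfolding smooth_edges_def by blast

lemma finite_smooth_points: "finite (smooth_points n w)"
  unfolding smooth_points_def by simp

lemma braid_word_letter:
  assumes "braid_word n w" "j < length w"
  shows "1 \<le> nat \<bar>w ! j\<bar>" "nat \<bar>w ! j\<bar> < n"
  using assms nth_mem[OF assms(2)] unfolding braid_word_def by fastforce+

lemma smooth_edges_insert_crossing: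
  assumes j: "j < length w" "j \<notin> S" and c: "c = nat \<bar>w ! j\<bar>" "1 \<le> c" "c < n"
  defines "E0 \<equiv> smooth_edges n w S - {((j, c-1), (Suc j, c-1)), ((j, c), (Suc j, c))}"
  shows "smooth_edges n w (insert j S) = E0 \<union> {((j, c-1), (j, c)), ((Suc j, c-1), (Suc j, c))}"
    and "smooth_edges n w S = E0 \<union> {((j, c-1), (Suc j, c-1)), ((j, c), (Suc j, c))}"
proof -
  show "smooth_edges n w S = E0 \<union> {((j, c-1), (Suc j, c-1)), ((j, c), (Suc j, c))}"
    using smooth_edge_vertical[of j w "c-1" n S] smooth_edge_vertical[of j w c n S] j c
    unfolding E0_def by auto
  show "smooth_edges n w (insert j S) = E0 \<union> {((j, c-1), (j, c)), ((Suc j, c-1), (Suc j, c))}"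
  proof (rule set_eqI)
    fix e :: "(nat \<times> nat) \<times> (nat \<times> nat)"
    obtain a b a' b' where e: "e = ((a, b), (a', b'))" by (metis prod.exhaust)
    show "e \<in> smooth_edges n w (insert j S) \<longleftrightarrow>
          e \<in> E0 \<union> {((j, c-1), (j, c)), ((Suc j, c-1), (Suc j, c))}"
      unfolding e E0_def smooth_edges_def using j c
      apply (simp only: Un_iff mem_Collect_eq Diff_iff insert_iff empty_iff prod.inject)
      apply (cases "a = j"; cases "a' = Suc j"; cases "a = Suc j"; cases "a' = j")
      apply auto
      done
  qed
qed

text \<open>Resmoothing a crossing replaces two arcs by two others on the same four endpoints.\<close>

lemma num_loops_insert_crossing:
  assumes "braid_word n w" "j < length w" "j \<notin> S"
  shows "num_loops n w (insert j S) \<le> num_loops n w S + 1"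
    and "num_loops n w S \<le> num_loops n w (insert j S) + 1"
  using smooth_edges_insert_crossing[OF assms(2,3) refl braid_word_letter[OF assms(1,2)]]
  unfolding num_loops_eq_num_components
  by (metis num_components_swap_edges finite_smooth_points)+

lemma num_loops_card_chain:
  assumes "braid_word n w" "S \<subseteq> T" "T \<subseteq> {..<length w}"
  shows "card S + num_loops n w S \<le> card T + num_loops n w T"
    and "num_loops n w T + card S \<le> num_loops n w S + card T"
proof -
  have step: "card S + num_loops n w S \<le> card (S \<union> X) + num_loops n w (S \<union> X) \<and>
      num_loops n w (S \<union> X) + card S \<le> num_loops n w S + card (S \<union> X)"
    if "finite X" "X \<subseteq> T - S" for X
    using that
  proof (induction X rule: finite_induct)
    case empty show ?case by simp
  next
    case (insert x X)
    have x: "x < length w" "x \<notin> S \<union> X" using insert assms(3) by auto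
    have "finite (S \<union> X)"
      using insert.hyps(1) assms(2,3) by (meson finite_UnI finite_lessThan finite_subset order.trans)
    hence "card (insert x (S \<union> X)) = card (S \<union> X) + 1" using x by simp
    moreover have "X \<subseteq> T - S" using insert.prems by simp
    ultimately show ?case using insert.IH num_loops_insert_crossing[OF assms(1) x] by simp
  qed
  have "finite (T - S)" using assms(3) finite_subset by blast
  from step[OF this] assms(2) show "card S + num_loops n w S \<le> card T + num_loops n w T"
    and "num_loops n w T + card S \<le> num_loops n w S + card T"
    by (simp_all add: Un_absorb1 Un_Diff_cancel)
qed

lemma smooth_conn_vertical:
  assumes "a \<le> b" "b \<le> length w" "k < n"
    and "\<And>i. a \<le> i \<Longrightarrow> i < b \<Longrightarrow> i \<notin> S \<or> (k \<noteq> nat \<bar>w ! i\<bar> - 1 \<and> k \<noteq> nat \<bar>w ! i\<bar>)"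
  shows "smooth_conn n w S (a, k) (b, k)"
  using assms
proof (induction b)
  case (Suc b)
  show ?case
  proof (cases "a = Suc b")
    case False
    hence "smooth_conn n w S (a, k) (b, k)" using Suc by simp
    moreover have "((b, k), (Suc b, k)) \<in> smooth_edges n w S"
      using Suc.prems False by (intro smooth_edge_vertical) auto
    ultimately show ?thesis by (meson smooth_conn_edge smooth_conn_trans)
  qed simp
qed simp

section \<open>Loop counts of special states\<close>

lemma num_loops_pos: "1 \<le> n \<Longrightarrow> 1 \<le> num_loops n w S"
proof -
  assume "1 \<le> n"
  hence "(0, 0) \<in> smooth_points n w" unfolding smooth_points_def by auto
  thus ?thesis unfolding num_loops_eq_num_components num_components_def
    by (metis One_nat_def Suc_leI card_gt_0_iff finite_imageI finite_smooth_points
        image_is_empty empty_iff)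
qed

lemma num_loops_le: "num_loops n w S \<le> (length w + 1) * n"
proof -
  have "num_loops n w S \<le> card (smooth_points n w)"
    unfolding num_loops_eq_num_components num_components_def
    by (rule card_image_le[OF finite_smooth_points])
  thus ?thesis unfolding smooth_points_def by (simp add: card_cartesian_product)
qed

lemma smooth_conn_empty_same_strand:
  assumes "smooth_conn n w {} u v" shows "snd u = snd v"
  using assms
proof (induction rule: rtrancl_induct)
  case (step y z)
  thus ?case unfolding smooth_edges_def by auto
qed simp

lemma num_loops_empty_ge: "n \<le> num_loops n w {}"
proof -
  let ?E = "smooth_edges n w {}"
  let ?P = "(\<lambda>k. (0, k)) ` {..<n}"
  have "inj_on (conn_class ?E) ?P"
    by (rule inj_onI) (auto dest: smooth_conn_empty_same_strand simp: conn_class_eq_iff)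
  hence "card (conn_class ?E ` ?P) = n" by (simp add: card_image inj_on_def)
  moreover have "card (conn_class ?E ` ?P) \<le> card (conn_class ?E ` smooth_points n w)"
    by (rule card_mono) (auto simp: finite_smooth_points smooth_points_def)
  ultimately show ?thesis unfolding num_loops_eq_num_components num_components_def by simp
qed

lemma num_loops_singleton_le:
  assumes bw: "braid_word n w" and j: "j < length w"
  shows "num_loops n w {j} \<le> n - 1"
proof -
  define c where "c = nat \<bar>w ! j\<bar>"
  have c: "1 \<le> c" "c < n" using braid_word_letter[OF bw j] unfolding c_def by auto
  have lvl0: "smooth_conn n w {j} (i, k) (0, k)" if "i \<le> length w" "k < n" for i k
  proof (cases "i \<le> j")
    case True
    have "smooth_conn n w {j} (0, k) (i, k)"
      by (rule smooth_conn_vertical) (use that True in auto)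
    thus ?thesis by (rule smooth_conn_sym)
  next
    case False
    have "smooth_conn n w {j} (i, k) (length w, k)"
      by (rule smooth_conn_vertical) (use that False in auto)
    moreover have "smooth_conn n w {j} (length w, k) (0, k)"
      using smooth_edge_closure that(2) by (metis smooth_conn_edge)
    ultimately show ?thesis by (rule smooth_conn_trans)
  qed
  have "smooth_conn n w {j} (0, c) (j, c)" using lvl0[of j c] j c by (simp add: smooth_conn_sym)
  moreover have "smooth_conn n w {j} (j, c) (j, c - 1)"
    using smooth_edge_cup[of j w "{j}" n] j unfolding c_def by (metis smooth_conn_sym smooth_conn_edge singletonI)
  moreover have "smooth_conn n w {j} (j, c - 1) (0, c - 1)" using lvl0 j c by simp
  ultimately have cc: "smooth_conn n w {j} (0, c) (0, c - 1)" by (meson smooth_conn_trans)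
  define R where "R = (\<lambda>k. (0::nat, k)) ` ({..<n} - {c})"
  have "num_loops n w {j} \<le> card R"
    unfolding num_loops_eq_num_components
  proof (rule num_components_le_card_reps)
    fix v assume "v \<in> smooth_points n w"
    then obtain i k where v: "v = (i, k)" "i \<le> length w" "k < n" unfolding smooth_points_def by auto
    show "\<exists>r\<in>R. smooth_conn n w {j} v r"
    proof (cases "k = c")
      case True
      hence "smooth_conn n w {j} v (0, c)" using lvl0[OF v(2,3)] v(1) by simp
      hence "smooth_conn n w {j} v (0, c - 1)" using cc by (rule smooth_conn_trans)
      moreover have "(0, c - 1) \<in> R" unfolding R_def using c by auto
      ultimately show ?thesis by blast
    next
      case False
      hence "(0, k) \<in> R" unfolding R_def using v by auto
      thus ?thesis using lvl0 v by blast
    qed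
  qed (simp add: R_def)
  also have "card R \<le> card ({..<n} - {c})" unfolding R_def by (rule card_image_le) simp
  also have "\<dots> = n - 1" using c by simp
  finally show ?thesis .
qed

section \<open>Coefficients of the Kauffman bracket\<close>

lemma loop_val_times_nth: "(f * loop_val) $$ t = - f $$ (t - 2) - f $$ (t + 2)"
proof -
  have "f * loop_val = - fls_shift (-2) f - fls_shift 2 f"
    unfolding loop_val_def fls_X_power_conv_shift_1 fls_X_inv_power_conv_shift_1
    by (simp add: algebra_simps fls_shifted_times_simps)
  thus ?thesis by simp
qed

lemma loop_val_power_nth:
  "(2 * int p < t \<longrightarrow> (loop_val ^ p) $$ t = 0) \<and> (t < - 2 * int p \<longrightarrow> (loop_val ^ p) $$ t = 0)
   \<and> (loop_val ^ p) $$ (- 2 * int p) = (-1) ^ p"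
proof (induction p arbitrary: t)
  case (Suc p)
  have pow: "loop_val ^ Suc p = loop_val ^ p * loop_val" by (simp add: power_Suc2)
  have "2 * int (Suc p) < t \<longrightarrow> (loop_val ^ Suc p) $$ t = 0"
    and "t < - 2 * int (Suc p) \<longrightarrow> (loop_val ^ Suc p) $$ t = 0"
    unfolding pow loop_val_times_nth using Suc.IH[of "t - 2"] Suc.IH[of "t + 2"] by auto
  moreover have "(loop_val ^ Suc p) $$ (- 2 * int (Suc p)) =
       - (loop_val ^ p) $$ (- 2 * int (Suc p) - 2) - (loop_val ^ p) $$ (- 2 * int p)"
    unfolding pow loop_val_times_nth by simp
  moreover have "(loop_val ^ p) $$ (- 2 * int (Suc p) - 2) = 0"
    using Suc.IH[of "- 2 * int (Suc p) - 2"] by auto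
  ultimately show ?case using Suc.IH by simp
qed simp

corollary loop_val_power_nth_eq_0:
  "2 * int p < t \<or> t < - 2 * int p \<Longrightarrow> (loop_val ^ p) $$ t = 0"
  using loop_val_power_nth by blast

lemma fls_X_intpow_times_nth: "(fls_X_intpow e * (f :: int fls)) $$ t = f $$ (t - e)"
  by (simp add: fls_X_intpow_times_conv_shift)

lemma kauffman_bracket_nth:
  "kauffman_bracket n w $$ t =
     (\<Sum>S\<in>Pow {..<length w}. (loop_val ^ (num_loops n w S - 1)) $$ (t - state_exp w S))"
  unfolding kauffman_bracket_def fls_nth_sum fls_X_intpow_times_nth ..

lemma jones_A_nth:
  "jones_A n w $$ t = (-1) ^ nat \<bar>writhe w\<bar> * kauffman_bracket n w $$ (t + 3 * writhe w)"
  unfolding jones_A_def mult.assoc fls_mult_const_nth fls_X_intpow_times_nth by simp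

lemma jones_deg_le:
  assumes "\<exists>k. jones_coeff n w k \<noteq> 0" and "\<And>k. jones_coeff n w k \<noteq> 0 \<Longrightarrow> k \<le> B"
  shows "jones_deg n w \<le> B"
proof -
  define K where "K = {k. jones_coeff n w k \<noteq> 0}"
  have "K \<subseteq> {fls_subdegree (jones_A n w) div 2 .. B}"
  proof
    fix k assume "k \<in> K"
    hence "jones_A n w $$ (2 * k) \<noteq> 0" "k \<le> B" using assms(2) unfolding K_def jones_coeff_def by auto
    moreover from this have "\<not> 2 * k < fls_subdegree (jones_A n w)"
      using fls_eq0_below_subdegree by blast
    ultimately show "k \<in> {fls_subdegree (jones_A n w) div 2 .. B}" by auto
  qed
  hence "finite K" using finite_subset by blast
  moreover have "K \<noteq> {}" using assms(1) unfolding K_def by blast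
  ultimately show ?thesis unfolding jones_deg_def K_def[symmetric] using assms(2) K_def by auto
qed

section \<open>Braids with only positive letters\<close>

lemma writhe_positive: "(\<And>g. g \<in> set w \<Longrightarrow> 0 < g) \<Longrightarrow> writhe w = - int (length w)"
  unfolding writhe_def by (induction w) auto

context
  fixes n :: nat and w :: "int list"
  assumes bw: "braid_word n w" and pos: "\<And>g. g \<in> set w \<Longrightarrow> 0 < g"
begin

lemma state_exp_positive: "S \<subseteq> {..<length w} \<Longrightarrow> state_exp w S = 2 * int (card S) - int (length w)"
proof -
  assume S: "S \<subseteq> {..<length w}"
  have "state_exp w S = (\<Sum>j<length w. if j \<in> S then 1 else -1)"
    unfolding state_exp_def using pos by (intro sum.cong) auto
  also have "\<dots> = int (card S) - int (card ({..<length w} - S))"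
    using S by (simp add: sum.If_cases Int_absorb1 Diff_eq[symmetric])
  also have "card ({..<length w} - S) = length w - card S"
    using S by (simp add: card_Diff_subset finite_subset)
  finally show ?thesis using card_mono[OF _ S] by simp
qed

lemma jones_A_nth_positive:
  "jones_A n w $$ t = (-1) ^ length w * kauffman_bracket n w $$ (t - 3 * int (length w))"
  using writhe_positive[OF pos] by (simp add: jones_A_nth)

lemma jones_coeff_nonzero_le:
  assumes "1 \<le> n" "jones_coeff n w k \<noteq> 0"
  shows "k \<le> 2 * int (length w) + int (num_loops n w {..<length w}) - 1"
proof (rule ccontr)
  assume "\<not> ?thesis"
  hence k: "2 * int (length w) + int (num_loops n w {..<length w}) - 1 < k" by simp
  \<comment> \<open>every state S lies below the all-cup-cap state in the chain inequality\<close>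
  have "kauffman_bracket n w $$ (2 * k - 3 * int (length w)) = 0"
    unfolding kauffman_bracket_nth
  proof (rule sum.neutral, rule ballI)
    fix S assume "S \<in> Pow {..<length w}"
    hence S: "S \<subseteq> {..<length w}" by simp
    have "card S + num_loops n w S \<le> card {..<length w} + num_loops n w {..<length w}"
      by (rule num_loops_card_chain(1)[OF bw S]) simp
    hence "2 * int (num_loops n w S - 1) < 2 * k - 3 * int (length w) - state_exp w S"
      using state_exp_positive[OF S] num_loops_pos[OF assms(1)] k by simp
    thus "(loop_val ^ (num_loops n w S - 1)) $$ (2 * k - 3 * int (length w) - state_exp w S) = 0"
      by (simp add: loop_val_power_nth_eq_0)
  qed
  thus False using assms(2) unfolding jones_coeff_def jones_A_nth_positive by simp
qed

text \<open>The state without cup-caps is the only one reaching A-degree -N - 2(loops - 1).\<close>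

lemma jones_coeff_exists_nonzero: "\<exists>k. jones_coeff n w k \<noteq> 0"
proof -
  let ?N = "length w"
  define p0 where "p0 = num_loops n w {} - 1"
  define t0 where "t0 = - int ?N - 2 * int p0"
  have "kauffman_bracket n w $$ t0 =
      (loop_val ^ p0) $$ (t0 - state_exp w {}) +
      (\<Sum>S\<in>Pow {..<?N} - {{}}. (loop_val ^ (num_loops n w S - 1)) $$ (t0 - state_exp w S))"
    unfolding kauffman_bracket_nth p0_def by (rule sum.remove) auto
  also have "(\<Sum>S\<in>Pow {..<?N} - {{}}. (loop_val ^ (num_loops n w S - 1)) $$ (t0 - state_exp w S)) = 0"
  proof (rule sum.neutral, rule ballI)
    fix S assume "S \<in> Pow {..<?N} - {{}}"
    then obtain j where S: "S \<subseteq> {..<?N}" and j: "j \<in> S" by auto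
    have "num_loops n w S + card {j} \<le> num_loops n w {j} + card S"
      by (rule num_loops_card_chain(2)[OF bw _ S]) (use j in simp)
    moreover have "num_loops n w {j} \<le> n - 1" using S j by (intro num_loops_singleton_le[OF bw]) auto
    moreover have "n \<le> num_loops n w {}" by (rule num_loops_empty_ge)
    ultimately have "t0 - state_exp w S < - 2 * int (num_loops n w S - 1)"
      using state_exp_positive[OF S] unfolding t0_def p0_def by simp
    thus "(loop_val ^ (num_loops n w S - 1)) $$ (t0 - state_exp w S) = 0"
      by (simp add: loop_val_power_nth_eq_0)
  qed
  also have "t0 - state_exp w {} = - 2 * int p0" using state_exp_positive[of "{}"] unfolding t0_def by simp
  finally have "kauffman_bracket n w $$ t0 = (-1) ^ p0" using loop_val_power_nth by simp
  hence "jones_coeff n w (int ?N - int p0) \<noteq> 0"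
    unfolding jones_coeff_def jones_A_nth_positive t0_def by (simp add: algebra_simps)
  thus ?thesis by blast
qed

end

section \<open>The all-cup-cap state of a word in x_1 and x_2\<close>

definition strands :: "int \<Rightarrow> nat set" where
  "strands g = {nat \<bar>g\<bar> - 1, nat \<bar>g\<bar>}"

definition free_strand :: "int \<Rightarrow> nat" where
  "free_strand g = (if g = 1 then 2 else 0)"

lemma strands_cases: "g = 1 \<or> g = 2 \<Longrightarrow> k < 3 \<Longrightarrow> k = free_strand g \<or> k \<in> strands g"
  by (auto simp: free_strand_def strands_def)

lemma free_strand_notin_strands: "g = 1 \<or> g = 2 \<Longrightarrow> free_strand g \<notin> strands g"
  by (auto simp: free_strand_def strands_def)

lemma free_strand_in_strands:
  "g = 1 \<or> g = 2 \<Longrightarrow> h = 1 \<or> h = 2 \<Longrightarrow> g \<noteq> h \<Longrightarrow> free_strand g \<in> strands h"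
  by (auto simp: free_strand_def strands_def)

lemma one_in_strands: "g = 1 \<or> g = 2 \<Longrightarrow> 1 \<in> strands g"
  by (auto simp: strands_def)

lemma free_strand_less_3: "free_strand g < 3"
  by (simp add: free_strand_def)

definition repeat_positions :: "int list \<Rightarrow> nat set" where
  "repeat_positions w = {j. 0 < j \<and> j < length w \<and> w ! (j - 1) = w ! j}"

context
  fixes w :: "int list"
  assumes letters: "\<And>j. j < length w \<Longrightarrow> w ! j = 1 \<or> w ! j = 2"
begin

abbreviation cupcap_conn :: "nat \<times> nat \<Rightarrow> nat \<times> nat \<Rightarrow> bool" where
  "cupcap_conn \<equiv> smooth_conn 3 w {..<length w}"

lemma cupcap_conn_cup:
  assumes "i < length w" "k \<in> strands (w ! i)" "k' \<in> strands (w ! i)"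
  shows "cupcap_conn (i, k) (i, k')"
proof -
  have e: "cupcap_conn (i, nat \<bar>w ! i\<bar> - 1) (i, nat \<bar>w ! i\<bar>)"
    using smooth_edge_cup[of i w "{..<length w}" 3] assms(1) by (intro smooth_conn_edge) simp
  from assms(2,3) consider "k = k'" | "k = nat \<bar>w ! i\<bar> - 1 \<and> k' = nat \<bar>w ! i\<bar>"
    | "k = nat \<bar>w ! i\<bar> \<and> k' = nat \<bar>w ! i\<bar> - 1"
    unfolding strands_def by auto
  then show ?thesis using e smooth_conn_sym[OF e] by cases simp_all
qed

lemma cupcap_conn_cap:
  assumes "i < length w" "k \<in> strands (w ! i)" "k' \<in> strands (w ! i)"
  shows "cupcap_conn (Suc i, k) (Suc i, k')"
proof -
  have e: "cupcap_conn (Suc i, nat \<bar>w ! i\<bar> - 1) (Suc i, nat \<bar>w ! i\<bar>)"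
    using smooth_edge_cap[of i w "{..<length w}" 3] assms(1) by (intro smooth_conn_edge) simp
  from assms(2,3) consider "k = k'" | "k = nat \<bar>w ! i\<bar> - 1 \<and> k' = nat \<bar>w ! i\<bar>"
    | "k = nat \<bar>w ! i\<bar> \<and> k' = nat \<bar>w ! i\<bar> - 1"
    unfolding strands_def by auto
  then show ?thesis using e smooth_conn_sym[OF e] by cases simp_all
qed

lemma cupcap_conn_free:
  assumes "i < length w"
  shows "cupcap_conn (i, free_strand (w ! i)) (Suc i, free_strand (w ! i))"
  using free_strand_notin_strands[OF letters[OF assms]] assms free_strand_less_3
  by (intro smooth_conn_edge smooth_edge_vertical) (auto simp: strands_def)

lemma cupcap_conn_closure: "k < 3 \<Longrightarrow> cupcap_conn (length w, k) (0, k)"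
  by (metis smooth_conn_edge smooth_edge_closure)

text \<open>Where the letter changes, the cap of one crossing and the cup of the next join all three strands.\<close>

lemma cupcap_conn_letter_change:
  assumes "Suc i < length w" "w ! Suc i \<noteq> w ! i" "k < 3"
  shows "cupcap_conn (Suc i, k) (Suc i, 1)"
proof -
  have li: "w ! i = 1 \<or> w ! i = 2" and ls: "w ! Suc i = 1 \<or> w ! Suc i = 2"
    using letters assms(1) by auto
  from strands_cases[OF li assms(3)] show ?thesis
  proof
    assume "k = free_strand (w ! i)"
    thus ?thesis using free_strand_in_strands[OF li ls] assms(1,2) one_in_strands[OF ls]
      by (auto intro: cupcap_conn_cup)
  qed (use assms(1) one_in_strands[OF li] in \<open>auto intro: cupcap_conn_cap\<close>)
qed

lemma cupcap_conn_level0_or_repeat: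
  "i \<le> length w \<Longrightarrow> k < 3 \<Longrightarrow>
     (i \<in> repeat_positions w \<and> k \<in> strands (w ! i)) \<or> (\<exists>k'<3. cupcap_conn (i, k) (0, k'))"
proof (induction i arbitrary: k)
  case 0
  have "cupcap_conn (0, k) (0, k)" by simp
  thus ?case using 0 by blast
next
  case (Suc i)
  have i: "i < length w" using Suc.prems by simp
  show ?case
  proof (cases "Suc i = length w")
    case True
    hence "cupcap_conn (Suc i, k) (0, k)" using cupcap_conn_closure[OF Suc.prems(2)] by simp
    thus ?thesis using Suc.prems(2) by blast
  next
    case False
    hence si: "Suc i < length w" using Suc.prems by simp
    have "free_strand (w ! i) \<notin> strands (w ! i)" using free_strand_notin_strands letters[OF i] by blast
    moreover have "(i \<in> repeat_positions w \<and> free_strand (w ! i) \<in> strands (w ! i))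
        \<or> (\<exists>k'<3. cupcap_conn (i, free_strand (w ! i)) (0, k'))"
      using i free_strand_less_3 by (intro Suc.IH) simp_all
    ultimately obtain k' where k': "k' < 3" "cupcap_conn (i, free_strand (w ! i)) (0, k')" by blast
    have top: "cupcap_conn (Suc i, free_strand (w ! i)) (0, k')"
      using smooth_conn_trans[OF smooth_conn_sym[OF cupcap_conn_free[OF i]] k'(2)] .
    show ?thesis
    proof (cases "w ! Suc i = w ! i")
      case True
      hence rep: "Suc i \<in> repeat_positions w" using si by (simp add: repeat_positions_def)
      from strands_cases[OF letters[OF si] Suc.prems(2)] show ?thesis
      proof
        assume "k = free_strand (w ! Suc i)"
        hence "cupcap_conn (Suc i, k) (0, k')" using top True by simp
        thus ?thesis using k'(1) by blast
      qed (use rep in blast)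
    next
      case False
      have k1: "cupcap_conn (Suc i, k) (Suc i, 1)"
        and free1: "cupcap_conn (Suc i, free_strand (w ! i)) (Suc i, 1)"
        using cupcap_conn_letter_change[OF si False] Suc.prems free_strand_less_3 by auto
      have "cupcap_conn (Suc i, k) (0, k')"
        using smooth_conn_trans[OF k1 smooth_conn_trans[OF smooth_conn_sym[OF free1] top]] .
      thus ?thesis using k'(1) by blast
    qed
  qed
qed

lemma cupcap_conn_level0:
  assumes "w \<noteq> []" "k < 3"
  shows "cupcap_conn (0, k) (0, 1) \<or> (k = free_strand (w ! 0) \<and> w ! (length w - 1) = w ! 0)"
proof -
  let ?l = "length w - 1"
  have l: "?l < length w" "Suc ?l = length w" using assms(1) by auto
  have l0: "w ! 0 = 1 \<or> w ! 0 = 2" and ll: "w ! ?l = 1 \<or> w ! ?l = 2"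
    using letters l assms(1) by auto
  from strands_cases[OF l0 assms(2)] show ?thesis
  proof
    assume k: "k = free_strand (w ! 0)"
    show ?thesis
    proof (cases "w ! ?l = w ! 0")
      case False
      \<comment> \<open>the closure arcs lead to the cap of the last crossing, which joins k and 1\<close>
      hence "k \<in> strands (w ! ?l)" "1 \<in> strands (w ! ?l)"
        using free_strand_in_strands[OF l0 ll] one_in_strands[OF ll] k by auto
      from cupcap_conn_cap[OF l(1) this] have cap: "cupcap_conn (length w, k) (length w, 1)"
        unfolding l(2) .
      have "cupcap_conn (length w, 1) (0, 1)" by (simp add: cupcap_conn_closure)
      hence "cupcap_conn (0, k) (0, 1)"
        using smooth_conn_trans[OF smooth_conn_sym[OF cupcap_conn_closure[OF assms(2)]] cap]
        by (rule smooth_conn_trans[rotated])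
      thus ?thesis ..
    qed (use k in simp)
  qed (use assms(1) one_in_strands[OF l0] in \<open>auto intro: cupcap_conn_cup\<close>)
qed

lemma num_loops_cupcap_le:
  assumes "w \<noteq> []"
  shows "num_loops 3 w {..<length w}
           \<le> card (repeat_positions w) + 1 + of_bool (w ! (length w - 1) = w ! 0)"
proof -
  define Rep where "Rep = (\<lambda>j. (j, nat \<bar>w ! j\<bar> - 1)) ` repeat_positions w"
  define Cyc where "Cyc = (if w ! (length w - 1) = w ! 0 then {(0::nat, free_strand (w ! 0))} else {})"
  have fin: "finite (repeat_positions w)" unfolding repeat_positions_def by simp
  have "num_loops 3 w {..<length w} \<le> card (Rep \<union> {(0, 1)} \<union> Cyc)"
    unfolding num_loops_eq_num_components
  proof (rule num_components_le_card_reps)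
    fix v assume "v \<in> smooth_points 3 w"
    then obtain i k where v: "v = (i, k)" "i \<le> length w" "k < 3" unfolding smooth_points_def by auto
    from cupcap_conn_level0_or_repeat[OF v(2,3)]
    show "\<exists>r\<in>Rep \<union> {(0, 1)} \<union> Cyc. cupcap_conn v r"
    proof
      assume rep: "i \<in> repeat_positions w \<and> k \<in> strands (w ! i)"
      hence "i < length w" by (simp add: repeat_positions_def)
      hence "cupcap_conn (i, k) (i, nat \<bar>w ! i\<bar> - 1)" using rep
        by (intro cupcap_conn_cup) (auto simp: strands_def)
      moreover have "(i, nat \<bar>w ! i\<bar> - 1) \<in> Rep" using rep by (simp add: Rep_def)
      ultimately show ?thesis using v by blast
    next
      assume "\<exists>k'<3. cupcap_conn (i, k) (0, k')"
      then obtain k' where k': "k' < 3" "cupcap_conn (i, k) (0, k')" by blast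
      from cupcap_conn_level0[OF assms k'(1)] have "\<exists>r\<in>{(0, 1)} \<union> Cyc. cupcap_conn (0, k') r"
      proof
        assume "k' = free_strand (w ! 0) \<and> w ! (length w - 1) = w ! 0"
        hence "(0, k') \<in> Cyc" by (simp add: Cyc_def)
        moreover have "cupcap_conn (0, k') (0, k')" by simp
        ultimately show ?thesis by blast
      qed blast
      then obtain r where "r \<in> {(0, 1)} \<union> Cyc" "cupcap_conn (0, k') r" by blast
      thus ?thesis using smooth_conn_trans[OF k'(2)] v(1) by blast
    qed
  qed (simp add: Rep_def Cyc_def fin)
  also have "\<dots> \<le> card Rep + card {(0::nat, 1::nat)} + card Cyc"
    using card_Un_le[of "Rep \<union> {(0, 1)}" Cyc] card_Un_le[of Rep "{(0, 1)}"] by linarith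
  also have "\<dots> \<le> card (repeat_positions w) + 1 + of_bool (w ! (length w - 1) = w ! 0)"
    using card_image_le[OF fin] by (simp add: Rep_def Cyc_def)
  finally show ?thesis .
qed

end

section \<open>Repetitions in the alternating word\<close>

lemma card_repeat_positions_snoc:
  "card (repeat_positions (w @ [x])) = card (repeat_positions w) + of_bool (w \<noteq> [] \<and> last w = x)"
proof -
  have "repeat_positions (w @ [x]) =
          repeat_positions w \<union> (if w \<noteq> [] \<and> last w = x then {length w} else {})"
  proof (rule set_eqI)
    fix j
    show "j \<in> repeat_positions (w @ [x]) \<longleftrightarrow>
          j \<in> repeat_positions w \<union> (if w \<noteq> [] \<and> last w = x then {length w} else {})"
    proof (cases "j < length w")
      case True thus ?thesis unfolding repeat_positions_def by (auto simp: nth_append)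
    next
      case False
      thus ?thesis unfolding repeat_positions_def
        by (cases w rule: rev_cases) (auto simp: nth_append)
    qed
  qed
  moreover have "length w \<notin> repeat_positions w" "finite (repeat_positions w)"
    unfolding repeat_positions_def by auto
  ultimately show ?thesis by (cases "w \<noteq> [] \<and> last w = x") simp_all
qed

lemma card_repeat_positions_append_replicate:
  "1 \<le> m \<Longrightarrow> card (repeat_positions (w @ replicate m x))
     = card (repeat_positions w) + (m - 1) + of_bool (w \<noteq> [] \<and> last w = x)"
proof (induction m)
  case (Suc m)
  show ?case
  proof (cases "m = 0")
    case False
    have "w @ replicate (Suc m) x = (w @ replicate m x) @ [x]"
      by (simp add: replicate_append_same)
    thus ?thesis using card_repeat_positions_snoc[of "w @ replicate m x" x] Suc False by simp
  qed (simp add: card_repeat_positions_snoc)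
qed simp

definition alt_letter :: "nat \<Rightarrow> int" where
  "alt_letter i = (if odd i then 1 else 2)"

definition alt_prefix :: "(nat \<Rightarrow> nat) \<Rightarrow> nat \<Rightarrow> int list" where
  "alt_prefix a K = concat (map (\<lambda>i. replicate (a i) (alt_letter i)) [1..<K+1])"

lemma alt_prefix_0 [simp]: "alt_prefix a 0 = []"
  unfolding alt_prefix_def by simp

lemma alt_prefix_Suc: "alt_prefix a (Suc K) = alt_prefix a K @ replicate (a (Suc K)) (alt_letter (Suc K))"
  unfolding alt_prefix_def by simp

lemma alt_word_eq_alt_prefix: "alt_word L a = alt_prefix a (2 * L)"
  unfolding alt_word_def alt_prefix_def alt_letter_def by simp

lemma length_alt_prefix: "length (alt_prefix a K) = (\<Sum>i=1..K. a i)"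
  by (induction K) (simp_all add: alt_prefix_Suc)

lemma set_alt_prefix: "set (alt_prefix a K) \<subseteq> {1, 2}"
  by (induction K) (auto simp: alt_prefix_Suc alt_letter_def)

lemma alt_prefix_eq_Nil_iff: "alt_prefix a K = [] \<longleftrightarrow> (\<forall>i\<in>{1..K}. a i = 0)"
  using length_alt_prefix[of a K] by auto

lemma card_filter_atLeastAtMost_Suc:
  "card {i\<in>{1..Suc K}. P i} = card {i\<in>{1..K}. P i} + of_bool (P (Suc K))"
proof -
  have "{i\<in>{1..Suc K}. P i} = {i\<in>{1..K}. P i} \<union> (if P (Suc K) then {Suc K} else {})"
    by (auto simp: le_Suc_eq)
  thus ?thesis by (cases "P (Suc K)") simp_all
qed

text \<open>
  A nonempty block x^m contributes m - 1 repetitions, plus one if it repeats the last letter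
  of the prefix, which can only happen right after an empty block.  The two indicators on the
  left record whether the prefix ends out of phase and whether it starts with x_2; each of
  these situations also costs an empty block.
\<close>

lemma alt_prefix_repeat_bound:
  "alt_prefix a K \<noteq> [] \<Longrightarrow>
     int (card {i\<in>{1..K}. a i \<noteq> 0}) + of_bool (last (alt_prefix a K) \<noteq> alt_letter K)
       + of_bool (alt_prefix a K ! 0 \<noteq> 1)
     \<le> int (length (alt_prefix a K)) - int (card (repeat_positions (alt_prefix a K)))
       + int (card {i\<in>{1..K}. a i = 0})"
proof (induction K)
  case (Suc K)
  let ?w = "alt_prefix a K" and ?m = "a (Suc K)" and ?x = "alt_letter (Suc K)"
  have Z: "card {i\<in>{1..Suc K}. a i = 0} = card {i\<in>{1..K}. a i = 0} + of_bool (?m = 0)"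
    and P: "card {i\<in>{1..Suc K}. a i \<noteq> 0} = card {i\<in>{1..K}. a i \<noteq> 0} + of_bool (?m \<noteq> 0)"
    by (rule card_filter_atLeastAtMost_Suc)+
  have letter_change: "alt_letter K \<noteq> ?x" unfolding alt_letter_def by auto
  show ?case
  proof (cases "?m = 0")
    case True
    hence "alt_prefix a (Suc K) = ?w" by (simp add: alt_prefix_Suc)
    moreover from this have "int (card {i\<in>{1..K}. a i \<noteq> 0}) + of_bool (last ?w \<noteq> alt_letter K)
       + of_bool (?w ! 0 \<noteq> 1) \<le> int (length ?w) - int (card (repeat_positions ?w))
       + int (card {i\<in>{1..K}. a i = 0})"
      using Suc by simp
    moreover have "of_bool (last ?w \<noteq> ?x) \<le> of_bool (last ?w \<noteq> alt_letter K) + (1::int)" by simp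
    ultimately show ?thesis unfolding Z P using True by simp
  next
    case False
    have w': "alt_prefix a (Suc K) = ?w @ replicate ?m ?x" by (rule alt_prefix_Suc)
    have reps: "int (card (repeat_positions (alt_prefix a (Suc K))))
        = int (card (repeat_positions ?w)) + int ?m - 1 + of_bool (?w \<noteq> [] \<and> last ?w = ?x)"
      unfolding w' using False card_repeat_positions_append_replicate[of ?m ?w ?x] by simp
    have len: "length (alt_prefix a (Suc K)) = length ?w + ?m" unfolding w' by simp
    have last: "last (alt_prefix a (Suc K)) = ?x" unfolding w' using False by simp
    show ?thesis
    proof (cases "?w = []")
      case True
      hence zeros: "{i\<in>{1..K}. a i = 0} = {1..K}" "{i\<in>{1..K}. a i \<noteq> 0} = {}"
        by (auto simp: alt_prefix_eq_Nil_iff)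
      have first: "alt_prefix a (Suc K) ! 0 = ?x" unfolding w' using True False by simp
      have "?x \<noteq> 1 \<Longrightarrow> 1 \<le> K" unfolding alt_letter_def by (cases K) auto
      thus ?thesis unfolding reps len last Z P zeros first using True False
        by (auto simp: of_bool_def repeat_positions_def)
    next
      case nonempty: False
      have "(of_bool (alt_prefix a (Suc K) ! 0 \<noteq> 1) :: int) = of_bool (?w ! 0 \<noteq> 1)"
        unfolding w' using nonempty by (simp add: nth_append)
      moreover have "of_bool (?w \<noteq> [] \<and> last ?w = ?x) \<le> (of_bool (last ?w \<noteq> alt_letter K) :: int)"
        using letter_change by auto
      moreover have "int (card {i\<in>{1..Suc K}. a i = 0}) = int (card {i\<in>{1..K}. a i = 0})"
        and "int (card {i\<in>{1..Suc K}. a i \<noteq> 0}) = int (card {i\<in>{1..K}. a i \<noteq> 0}) + 1"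
        unfolding Z P using False by simp_all
      moreover have "int (length (alt_prefix a (Suc K))) = int (length ?w) + int ?m" using len by simp
      moreover have "of_bool (last (alt_prefix a (Suc K)) \<noteq> alt_letter (Suc K)) = (0::int)"
        using last by simp
      ultimately show ?thesis using Suc.IH[OF nonempty] reps by linarith
    qed
  qed
qed simp

lemma num_loops_alt_word_le:
  fixes L :: nat and a :: "nat \<Rightarrow> nat"
  assumes "1 \<le> L"
  defines "w \<equiv> alt_word L a"
  shows "int (num_loops 3 w {..<length w})
           \<le> int (length w) + int (card {i\<in>{1..2*L}. a i = 0}) - int (card {i\<in>{1..2*L}. a i \<noteq> 0}) + 1"
proof (cases "w = []")
  case True
  hence zeros: "{i\<in>{1..2*L}. a i = 0} = {1..2*L}" "{i\<in>{1..2*L}. a i \<noteq> 0} = {}"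
    unfolding w_def alt_word_eq_alt_prefix alt_prefix_eq_Nil_iff by auto
  show ?thesis unfolding zeros using num_loops_le[of 3 w "{..<length w}"] True assms(1) by simp
next
  case False
  have letters: "w ! j = 1 \<or> w ! j = 2" if "j < length w" for j
    using set_alt_prefix[of a "2 * L"] nth_mem[OF that] unfolding w_def alt_word_eq_alt_prefix by auto
  have "int (num_loops 3 w {..<length w})
          \<le> int (card (repeat_positions w)) + 1 + of_bool (w ! (length w - 1) = w ! 0)"
    using of_nat_mono[OF num_loops_cupcap_le[OF letters False], where 'a = int] by simp
  moreover have "of_bool (w ! (length w - 1) = w ! 0)
                   \<le> of_bool (last w \<noteq> alt_letter (2 * L)) + (of_bool (w ! 0 \<noteq> 1) :: int)"
    using letters[of 0] letters[of "length w - 1"] False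
    by (auto simp: last_conv_nth alt_letter_def)
  moreover have "int (card {i\<in>{1..2*L}. a i \<noteq> 0}) + of_bool (last w \<noteq> alt_letter (2 * L))
       + of_bool (w ! 0 \<noteq> 1) \<le> int (length w) - int (card (repeat_positions w))
       + int (card {i\<in>{1..2*L}. a i = 0})"
    using alt_prefix_repeat_bound[of a "2 * L"] False unfolding w_def alt_word_eq_alt_prefix by simp
  ultimately show ?thesis by linarith
qed

theorem theorem4p11:
  fixes L :: nat and a :: "nat \<Rightarrow> nat"
  assumes "L \<ge> 1"
  shows "jones_deg 3 (alt_word L a)
           \<le> 3 * int (\<Sum>i=1..2*L. a i) - 2 * int L + 2 * int (card {i\<in>{1..2*L}. a i = 0})"
proof -
  define w where "w = alt_word L a"
  have set_w: "set w \<subseteq> {1, 2}" unfolding w_def alt_word_eq_alt_prefix by (rule set_alt_prefix)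
  hence bw: "braid_word 3 w" and pos: "\<And>g. g \<in> set w \<Longrightarrow> 0 < g"
    unfolding braid_word_def by auto
  have len: "length w = (\<Sum>i=1..2*L. a i)"
    unfolding w_def alt_word_eq_alt_prefix by (rule length_alt_prefix)
  have "card {i\<in>{1..2*L}. a i \<noteq> 0} + card {i\<in>{1..2*L}. a i = 0}
          = card ({i\<in>{1..2*L}. a i \<noteq> 0} \<union> {i\<in>{1..2*L}. a i = 0})"
    by (rule card_Un_disjoint[symmetric]) auto
  also have "{i\<in>{1..2*L}. a i \<noteq> 0} \<union> {i\<in>{1..2*L}. a i = 0} = {1..2*L}" by auto
  finally have "card {i\<in>{1..2*L}. a i \<noteq> 0} + card {i\<in>{1..2*L}. a i = 0} = 2 * L" by simp
  hence "int (card {i\<in>{1..2*L}. a i \<noteq> 0} + card {i\<in>{1..2*L}. a i = 0}) = int (2 * L)"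
    by (simp only:)
  hence "int (card {i\<in>{1..2*L}. a i \<noteq> 0}) + int (card {i\<in>{1..2*L}. a i = 0}) = 2 * int L"
    by simp
  hence bound: "2 * int (length w) + int (num_loops 3 w {..<length w}) - 1
           \<le> 3 * int (\<Sum>i=1..2*L. a i) - 2 * int L + 2 * int (card {i\<in>{1..2*L}. a i = 0})"
    using num_loops_alt_word_le[OF assms, of a, folded w_def] unfolding len[symmetric] by linarith
  show ?thesis unfolding w_def[symmetric]
  proof (rule jones_deg_le)
    show "\<exists>k. jones_coeff 3 w k \<noteq> 0" by (rule jones_coeff_exists_nonzero[OF bw pos])
  next
    fix k assume "jones_coeff 3 w k \<noteq> 0"
    hence "k \<le> 2 * int (length w) + int (num_loops 3 w {..<length w}) - 1"
      by (intro jones_coeff_nonzero_le[OF bw pos]) simp_all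
    with bound show "k \<le> 3 * int (\<Sum>i=1..2*L. a i) - 2 * int L + 2 * int (card {i\<in>{1..2*L}. a i = 0})"
      by linarith
  qed
qed

end
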